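(* Let $t\ge 2$, let $n_1,\dots,n_t$ be positive integers, and let $G=K_{n_1,\dots,n_t}$ be the complete $t$-partite graph with partite sets $V_1,\dots,V_t$, $|V_i|=n_i$. Let $N_t=\{1,\dots,t\}$ and $f(I)=\sum_{i\in I}n_i$ for $I\subseteq N_t$. Let $p$ be a positive integer with $f(N_t)>p$. Let $D$ be an optimal $\gamma_p(G)$-set, let $\ell=\min\{|D_i|: i\in N_t\setminus I_D\}$ and $A=\{i\in N_t\setminus I_D: |D_i|=\ell+1\}$. Then $|A|=0$ or $2\le |A|\le t-|I_D|-1$.
   Context: A set $S\subseteq V(G)$ is a $p$-dominating set of $G$ if every vertex $v\in V(G)\setminus S$ has at least $p$ neighbors in $S$. The $p$-domination number $\gamma_p(G)$ is the minimum cardinality of a $p$-dominating set of $G$, and a $\gamma_p(G)$-set is a $p$-dominating set of cardinality $\gamma_p(G)$. For $D\subseteq V(G)$ write $D_i=V_i\cap D$ for $i\in N_t$ and $I_D=\{i\in N_t: |D_i|=|V_i|\}$. For a $\gamma_p(G)$-set $D$ with $|I_D|<t$ define $$\mu(D)=\sum_{i\in N_t\setminus I_D}\left|\,|D_i|-\frac{|D|-f(I_D)}{t-|I_D|}\right|.$$ A $\gamma_p(G)$-set $D$ is optimal if: (1) $f(I_D)<p$; (2) $|I_D|\ge |I_S|$ for every $\gamma_p(G)$-set $S$; (3) $\mu(D)\le\mu(S)$ for every $\gamma_p(G)$-set $S$ with $I_S=I_D$. (For an optimal $D$, $N_t\setminus I_D\neq\emptyset$ and every $|D_i|$, $i\in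 N_t\setminus I_D$, equals $\ell$ or $\ell+1$; the paper defines $A$ as the set of those $i$ with $|D_i|=\ell+1$, which is empty when all these values equal $\ell$.) *)

theory Defs
  imports Complex_Main
begin

definition Nt :: "nat \<Rightarrow> nat set" where
  "Nt t = {1..t}"

definition part :: "(nat \<Rightarrow> nat) \<Rightarrow> nat \<Rightarrow> (nat \<times> nat) set" where
  "part n i = {(i, x) | x. x < n i}"

definition verts :: "(nat \<Rightarrow> nat) \<Rightarrow> nat \<Rightarrow> (nat \<times> nat) set" where
  "verts n t = (\<Union>i\<in>Nt t. part n i)"

definition adj :: "nat \<times> nat \<Rightarrow> nat \<times> nat \<Rightarrow> bool" where
  "adj u v \<longleftrightarrow> fst u \<noteq> fst v"

definition fsum :: "(nat \<Rightarrow> nat) \<Rightarrow> nat set \<Rightarrow> nat" where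
  "fsum n I = (\<Sum>i\<in>I. n i)"

definition p_dominating :: "(nat \<Rightarrow> nat) \<Rightarrow> nat \<Rightarrow> nat \<Rightarrow> (nat \<times> nat) set \<Rightarrow> bool" where
  "p_dominating n t p S \<longleftrightarrow> S \<subseteq> verts n t \<and>
     (\<forall>v \<in> verts n t - S. card {u \<in> S. adj u v} \<ge> p)"

definition gamma_p :: "(nat \<Rightarrow> nat) \<Rightarrow> nat \<Rightarrow> nat \<Rightarrow> nat" where
  "gamma_p n t p = Min {card S | S. p_dominating n t p S}"

definition gamma_p_set :: "(nat \<Rightarrow> nat) \<Rightarrow> nat \<Rightarrow> nat \<Rightarrow> (nat \<times> nat) set \<Rightarrow> bool" where
  "gamma_p_set n t p S \<longleftrightarrow> p_dominating n t p S \<and> card S = gamma_p n t p"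

definition Dpart :: "(nat \<times> nat) set \<Rightarrow> nat \<Rightarrow> (nat \<times> nat) set" where
  "Dpart D i = {v \<in> D. fst v = i}"

definition ID :: "(nat \<Rightarrow> nat) \<Rightarrow> nat \<Rightarrow> (nat \<times> nat) set \<Rightarrow> nat set" where
  "ID n t D = {i \<in> Nt t. card (Dpart D i) = n i}"

definition mu :: "(nat \<Rightarrow> nat) \<Rightarrow> nat \<Rightarrow> (nat \<times> nat) set \<Rightarrow> real" where
  "mu n t D = (\<Sum>i \<in> Nt t - ID n t D.
      \<bar>real (card (Dpart D i)) -
        (real (card D) - real (fsum n (ID n t D))) / (real t - real (card (ID n t D)))\<bar>)"

definition optimal :: "(nat \<Rightarrow> nat) \<Rightarrow> nat \<Rightarrow> nat \<Rightarrow> (nat \<times> nat) set \<Rightarrow> bool" where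
  "optimal n t p D \<longleftrightarrow> gamma_p_set n t p D \<and>
     fsum n (ID n t D) < p \<and>
     (\<forall>S. gamma_p_set n t p S \<longrightarrow> card (ID n t S) \<le> card (ID n t D)) \<and>
     (\<forall>S. gamma_p_set n t p S \<and> ID n t S = ID n t D \<longrightarrow> mu n t D \<le> mu n t S)"

end

theory Submission
  imports Defs
begin

text \<open>A set \<open>S\<close> of vertices of a complete multipartite graph is \<open>p\<close>-dominating iff
  \<open>p \<le> |S| - |S\<^sub>i|\<close> for every part \<open>V\<^sub>i\<close> not contained in \<open>S\<close>. For an optimal \<open>D\<close>, moving a
  vertex from a part with maximal \<open>|D\<^sub>i|\<close> to one with minimal \<open>|D\<^sub>i|\<close> (among the non-full
  parts) yields another \<open>\<gamma>\<^sub>p\<close>-set; if the two counts differed by at least two, it would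
  either fill a new part or strictly decrease \<open>\<mu>\<close>. Hence all these counts are \<open>\<ell>\<close> or
  \<open>\<ell> + 1\<close>, and \<open>A\<close> misses the part attaining \<open>\<ell>\<close>. If \<open>A\<close> were a single part, removing one
  of its vertices from \<open>D\<close> would leave a smaller \<open>p\<close>-dominating set.\<close>

lemma part_eq_image: "part n i = Pair i ` {..<n i}"
  unfolding part_def by auto

lemma card_part [simp]: "card (part n i) = n i"
  unfolding part_eq_image by (simp add: card_image inj_on_def)

lemma finite_part [simp]: "finite (part n i)"
  unfolding part_eq_image by simp

lemma finite_verts [simp]: "finite (verts n t)"
  unfolding verts_def Nt_def by simp

lemma finite_Nt [simp]: "finite (Nt t)"
  and card_Nt [simp]: "card (Nt t) = t"
  unfolding Nt_def by simp_all

lemma finite_subset_verts: "S \<subseteq> verts n t \<Longrightarrow> finite S"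
  using finite_subset finite_verts by blast

lemma finite_Dpart: "finite S \<Longrightarrow> finite (Dpart S i)"
  by (simp add: Dpart_def)

lemma Dpart_eq_Int_part: "S \<subseteq> verts n t \<Longrightarrow> Dpart S i = S \<inter> part n i"
  unfolding Dpart_def verts_def part_def by auto

lemma card_Dpart_le: "S \<subseteq> verts n t \<Longrightarrow> card (Dpart S i) \<le> n i"
  by (metis Dpart_eq_Int_part card_mono card_part finite_part inf_le2)

lemma nonfull_part_iff:
  "S \<subseteq> verts n t \<Longrightarrow> i \<in> Nt t - ID n t S \<longleftrightarrow> i \<in> Nt t \<and> card (Dpart S i) < n i"
  using card_Dpart_le[of S n t i] unfolding ID_def by auto

lemma obtain_vertex_outside_nonfull_part:
  assumes "S \<subseteq> verts n t" "card (Dpart S i) < n i"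
  obtains w where "w \<in> part n i" "w \<notin> S"
  using assms by (metis Dpart_eq_Int_part card_part inf.absorb_iff2 less_irrefl subsetI)

lemma card_Dpart_insert:
  "finite S \<Longrightarrow> w \<notin> S \<Longrightarrow>
    card (Dpart (insert w S) i) = (if fst w = i then Suc (card (Dpart S i)) else card (Dpart S i))"
proof -
  assume "finite S" "w \<notin> S"
  have "Dpart (insert w S) i = (if fst w = i then insert w (Dpart S i) else Dpart S i)"
    unfolding Dpart_def by auto
  then show ?thesis using \<open>finite S\<close> \<open>w \<notin> S\<close> by (simp add: Dpart_def)
qed

lemma card_Dpart_remove:
  "finite S \<Longrightarrow> v \<in> S \<Longrightarrow>
    card (Dpart (S - {v}) i) = (if fst v = i then card (Dpart S i) - 1 else card (Dpart S i))"
proof -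
  assume "finite S" "v \<in> S"
  have "Dpart (S - {v}) i = Dpart S i - {v}" unfolding Dpart_def by auto
  then show ?thesis using \<open>finite S\<close> \<open>v \<in> S\<close> by (simp add: Dpart_def)
qed

lemma card_adj_in:
  assumes "finite S"
  shows "card {u \<in> S. adj u v} = card S - card (Dpart S (fst v))"
proof -
  have "{u \<in> S. adj u v} = S - Dpart S (fst v)" by (auto simp: adj_def Dpart_def)
  then show ?thesis using assms by (simp add: card_Diff_subset Dpart_def)
qed

lemma p_dominating_iff_card_Dpart:
  assumes S: "S \<subseteq> verts n t"
  shows "p_dominating n t p S \<longleftrightarrow>
    (\<forall>i\<in>Nt t. card (Dpart S i) < n i \<longrightarrow> p \<le> card S - card (Dpart S i))"
proof
  have "finite S" using S by (rule finite_subset_verts)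
  assume dom: "p_dominating n t p S"
  show "\<forall>i\<in>Nt t. card (Dpart S i) < n i \<longrightarrow> p \<le> card S - card (Dpart S i)"
  proof (intro ballI impI)
    fix i assume i: "i \<in> Nt t" and "card (Dpart S i) < n i"
    then obtain w where w: "w \<in> part n i" "w \<notin> S"
      using obtain_vertex_outside_nonfull_part S by blast
    then have "w \<in> verts n t - S" "fst w = i" using i by (auto simp: verts_def part_def)
    then have "p \<le> card {u \<in> S. adj u w}" using dom by (simp add: p_dominating_def)
    then show "p \<le> card S - card (Dpart S i)"
      using card_adj_in[OF \<open>finite S\<close>] \<open>fst w = i\<close> by simp
  qed
next
  have "finite S" using S by (rule finite_subset_verts)
  assume H: "\<forall>i\<in>Nt t. card (Dpart S i) < n i \<longrightarrow> p \<le> card S - card (Dpart S i)"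
  show "p_dominating n t p S"
    unfolding p_dominating_def
  proof (intro conjI S ballI)
    fix w assume w: "w \<in> verts n t - S"
    then obtain i where i: "i \<in> Nt t" "w \<in> part n i" and "fst w = i"
      by (auto simp: verts_def part_def)
    have "Dpart S i \<subseteq> part n i - {w}" using Dpart_eq_Int_part[OF S] w by auto
    then have "card (Dpart S i) < n i"
      by (metis card_Diff1_less card_mono card_part finite_Diff finite_part i(2) order_le_less_trans)
    then show "p \<le> card {u \<in> S. adj u w}"
      using H i \<open>fst w = i\<close> card_adj_in[OF \<open>finite S\<close>] by auto
  qed
qed

lemma p_dominating_transfer:
  assumes dom: "p_dominating n t p D"
    and a: "a \<in> Nt t" "card (Dpart D a) < n a"
    and v: "v \<in> D" "fst v = a"
    and w: "w \<in> verts n t" "w \<notin> D"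
    and less: "card (Dpart D (fst w)) < card (Dpart D a)"
  shows "p_dominating n t p (insert w (D - {v}))" (is "p_dominating n t p ?S")
proof -
  have D: "D \<subseteq> verts n t" using dom by (simp add: p_dominating_def)
  then have "finite D" by (rule finite_subset_verts)
  have "0 < card D" using v \<open>finite D\<close> by (auto simp: card_gt_0_iff)
  then have card_S: "card ?S = card D" using \<open>finite D\<close> v w by simp
  have count_S: "card (Dpart ?S i) =
      (if fst w = i then Suc (card (Dpart D i))
       else if a = i then card (Dpart D i) - 1 else card (Dpart D i))" for i
    using less v w \<open>finite D\<close> by (auto simp: card_Dpart_insert card_Dpart_remove)
  have p_le_a: "p \<le> card D - card (Dpart D a)"
    using dom a by (simp add: p_dominating_iff_card_Dpart[OF D])
  have S: "?S \<subseteq> verts n t" using D w by auto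
  show ?thesis
    unfolding p_dominating_iff_card_Dpart[OF S]
  proof (intro ballI impI)
    fix i assume i: "i \<in> Nt t" and nonfull: "card (Dpart ?S i) < n i"
    show "p \<le> card ?S - card (Dpart ?S i)"
    proof (cases "i = a \<or> i = fst w")
      case True
      then have "card (Dpart ?S i) \<le> card (Dpart D a)" using count_S less by auto
      then show ?thesis using p_le_a card_S by linarith
    next
      case False
      then have "card (Dpart ?S i) = card (Dpart D i)" using count_S by auto
      then show ?thesis
        using dom i nonfull card_S by (simp add: p_dominating_iff_card_Dpart[OF D])
    qed
  qed
qed

lemma p_dominating_remove:
  assumes dom: "p_dominating n t p D"
    and j: "j \<in> Nt t" "card (Dpart D j) < n j"
    and v: "v \<in> D" "fst v = j"
    and smaller: "\<forall>i\<in>Nt t - {j}. card (Dpart D i) < n i \<longrightarrow> card (Dpart D i) < card (Dpart D j)"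
  shows "p_dominating n t p (D - {v})"
proof -
  have D: "D \<subseteq> verts n t" using dom by (simp add: p_dominating_def)
  then have "finite D" by (rule finite_subset_verts)
  have S: "D - {v} \<subseteq> verts n t" using D by auto
  have p_le_j: "p \<le> card D - card (Dpart D j)"
    using dom j by (simp add: p_dominating_iff_card_Dpart[OF D])
  have "v \<in> Dpart D j" using v by (simp add: Dpart_def)
  then have "0 < card (Dpart D j)"
    using \<open>finite D\<close> by (auto simp: finite_Dpart card_gt_0_iff)
  show ?thesis
    unfolding p_dominating_iff_card_Dpart[OF S]
  proof (intro ballI impI)
    fix i assume i: "i \<in> Nt t" and nonfull: "card (Dpart (D - {v}) i) < n i"
    show "p \<le> card (D - {v}) - card (Dpart (D - {v}) i)"
    proof (cases "i = j")
      case True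
      then show ?thesis
        using p_le_j \<open>0 < card (Dpart D j)\<close> v \<open>finite D\<close> by (simp add: card_Dpart_remove)
    next
      case False
      then have "card (Dpart (D - {v}) i) = card (Dpart D i)"
        using v \<open>finite D\<close> by (simp add: card_Dpart_remove)
      then show ?thesis
        using smaller i nonfull False p_le_j v \<open>finite D\<close> by force
    qed
  qed
qed

lemma gamma_p_le_card:
  assumes "p_dominating n t p S"
  shows "gamma_p n t p \<le> card S"
proof -
  have "{card S | S. p_dominating n t p S} \<subseteq> {..card (verts n t)}"
    by (auto simp: p_dominating_def card_mono)
  then have "finite {card S | S. p_dominating n t p S}" using finite_subset by blast
  then show ?thesis unfolding gamma_p_def using assms by (auto intro: Min_le)
qed

lemma gamma_p_set_max_count_not_unique:
  assumes gamma: "gamma_p_set n t p D"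
    and j: "j \<in> Nt t - ID n t D" "0 < card (Dpart D j)"
  shows "\<exists>i\<in>Nt t - ID n t D - {j}. card (Dpart D j) \<le> card (Dpart D i)"
proof (rule ccontr)
  assume "\<not> ?thesis"
  then have smaller: "\<forall>i\<in>Nt t - ID n t D - {j}. card (Dpart D i) < card (Dpart D j)"
    by (meson not_le)
  have dom: "p_dominating n t p D" using gamma by (simp add: gamma_p_set_def)
  then have D: "D \<subseteq> verts n t" by (simp add: p_dominating_def)
  then have "finite D" by (rule finite_subset_verts)
  obtain v where "v \<in> Dpart D j" using j(2) by (auto simp: card_gt_0_iff)
  then have v: "v \<in> D" "fst v = j" by (simp_all add: Dpart_def)
  then have "0 < card D" using \<open>finite D\<close> by (auto simp: card_gt_0_iff)
  have "gamma_p n t p \<le> card (D - {v})"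
  proof (intro gamma_p_le_card p_dominating_remove[OF dom _ _ v])
    show "j \<in> Nt t" "card (Dpart D j) < n j" using j(1) nonfull_part_iff[OF D] by auto
    show "\<forall>i\<in>Nt t - {j}. card (Dpart D i) < n i \<longrightarrow> card (Dpart D i) < card (Dpart D j)"
      using smaller nonfull_part_iff[OF D] by auto
  qed
  then have "card D \<le> card (D - {v})" using gamma by (simp add: gamma_p_set_def)
  then show False using v \<open>finite D\<close> \<open>0 < card D\<close> by simp
qed

lemma card_eq_fsum_ID_plus_nonfull:
  assumes S: "S \<subseteq> verts n t"
  shows "card S = fsum n (ID n t S) + (\<Sum>i\<in>Nt t - ID n t S. card (Dpart S i))"
proof -
  have "finite S" using S by (rule finite_subset_verts)
  have "S = (\<Union>i\<in>Nt t. Dpart S i)" using S by (auto simp: Dpart_def verts_def part_def)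
  moreover have "card (\<Union>i\<in>Nt t. Dpart S i) = (\<Sum>i\<in>Nt t. card (Dpart S i))"
    using finite_Dpart[OF \<open>finite S\<close>] by (intro card_UN_disjoint) (auto simp: Dpart_def)
  ultimately have "card S = (\<Sum>i\<in>Nt t. card (Dpart S i))" by simp
  also have "\<dots> = (\<Sum>i\<in>ID n t S. card (Dpart S i)) + (\<Sum>i\<in>Nt t - ID n t S. card (Dpart S i))"
    by (metis (no_types, lifting) ID_def add.commute finite_Nt mem_Collect_eq subsetI sum.subset_diff)
  also have "(\<Sum>i\<in>ID n t S. card (Dpart S i)) = fsum n (ID n t S)"
    by (simp add: fsum_def ID_def)
  finally show ?thesis .
qed

definition mean_count :: "(nat \<Rightarrow> nat) \<Rightarrow> nat \<Rightarrow> (nat \<times> nat) set \<Rightarrow> real" where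
  "mean_count n t S = (real (card S) - real (fsum n (ID n t S))) / (real t - real (card (ID n t S)))"

lemma mu_eq_sum_abs_deviation:
  "mu n t S = (\<Sum>i\<in>Nt t - ID n t S. \<bar>real (card (Dpart S i)) - mean_count n t S\<bar>)"
  unfolding mu_def mean_count_def ..

lemma mean_count_eq_average:
  assumes "S \<subseteq> verts n t"
  shows "mean_count n t S =
    (\<Sum>i\<in>Nt t - ID n t S. real (card (Dpart S i))) / real (card (Nt t - ID n t S))"
proof -
  have sub: "ID n t S \<subseteq> Nt t" by (auto simp: ID_def)
  then have "card (ID n t S) \<le> t" using card_mono[OF finite_Nt sub] by simp
  moreover have "card (Nt t - ID n t S) = t - card (ID n t S)"
    using sub by (simp add: card_Diff_subset finite_subset)
  ultimately have "real t - real (card (ID n t S)) = real (card (Nt t - ID n t S))"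
    by (simp add: of_nat_diff)
  moreover have "real (card S) - real (fsum n (ID n t S)) = (\<Sum>i\<in>Nt t - ID n t S. real (card (Dpart S i)))"
    using card_eq_fsum_ID_plus_nonfull[OF assms] by (metis add_diff_cancel_left' of_nat_add of_nat_sum)
  ultimately show ?thesis by (simp add: mean_count_def)
qed

lemma average_strictly_between:
  fixes f :: "'a \<Rightarrow> real"
  assumes J: "finite J" "a \<in> J" "b \<in> J"
    and bounds: "\<forall>i\<in>J. f b \<le> f i \<and> f i \<le> f a" and "f b < f a"
  shows "f b < sum f J / card J" "sum f J / card J < f a"
proof -
  have "0 < real (card J)" using J by (auto simp: card_gt_0_iff)
  have "(\<Sum>i\<in>J. f b) < sum f J"
    using bounds \<open>f b < f a\<close> J by (intro sum_strict_mono_ex1) auto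
  then show "f b < sum f J / card J" using \<open>0 < real (card J)\<close> by (simp add: field_simps)
  have "sum f J < (\<Sum>i\<in>J. f a)"
    using bounds \<open>f b < f a\<close> J by (intro sum_strict_mono_ex1) auto
  then show "sum f J / card J < f a" using \<open>0 < real (card J)\<close> by (simp add: field_simps)
qed

lemma sum_abs_deviation_transfer_less:
  fixes f g :: "'a \<Rightarrow> real"
  assumes J: "finite J" "a \<in> J" "b \<in> J"
    and g: "g a = f a - 1" "g b = f b + 1" "\<forall>i\<in>J - {a, b}. g i = f i"
    and c: "f b < c" "c < f a" and gap: "f b + 2 \<le> f a"
  shows "(\<Sum>i\<in>J. \<bar>g i - c\<bar>) < (\<Sum>i\<in>J. \<bar>f i - c\<bar>)"
proof -
  have "a \<noteq> b" using gap by auto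
  have split: "sum F J = F a + F b + sum F (J - {a, b})" for F :: "'a \<Rightarrow> real"
  proof -
    have "sum F J = F a + sum F (J - {a})" by (rule sum.remove[OF J(1,2)])
    moreover have "sum F (J - {a}) = F b + sum F (J - {a} - {b})"
      by (rule sum.remove) (use J \<open>a \<noteq> b\<close> in auto)
    moreover have "J - {a} - {b} = J - {a, b}" by auto
    ultimately show ?thesis by simp
  qed
  have "(\<Sum>i\<in>J - {a, b}. \<bar>g i - c\<bar>) = (\<Sum>i\<in>J - {a, b}. \<bar>f i - c\<bar>)"
    using g(3) by simp
  moreover have "\<bar>g a - c\<bar> + \<bar>g b - c\<bar> < \<bar>f a - c\<bar> + \<bar>f b - c\<bar>"
    using g c gap by (auto simp: abs_if)
  ultimately show ?thesis
    using split[of "\<lambda>i. \<bar>f i - c\<bar>"] split[of "\<lambda>i. \<bar>g i - c\<bar>"] by simp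
qed

lemma gamma_p_set_transfer:
  assumes gamma: "gamma_p_set n t p D"
    and a: "a \<in> Nt t - ID n t D" and b: "b \<in> Nt t - ID n t D"
    and less: "card (Dpart D b) < card (Dpart D a)"
  obtains S where "gamma_p_set n t p S"
    and "\<And>i. card (Dpart S i) = (if i = a then card (Dpart D a) - 1
                                 else if i = b then Suc (card (Dpart D b)) else card (Dpart D i))"
proof -
  have dom: "p_dominating n t p D" using gamma by (simp add: gamma_p_set_def)
  then have D: "D \<subseteq> verts n t" by (simp add: p_dominating_def)
  then have "finite D" by (rule finite_subset_verts)
  obtain v where "v \<in> Dpart D a"
    using less by (metis card.empty ex_in_conv not_less_zero)
  then have v: "v \<in> D" "fst v = a" by (simp_all add: Dpart_def)
  obtain w where w: "w \<in> part n b" "w \<notin> D"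
    using obtain_vertex_outside_nonfull_part[OF D] b nonfull_part_iff[OF D] by blast
  have "w \<in> verts n t" "fst w = b" using w b by (auto simp: verts_def part_def)
  define S where "S = insert w (D - {v})"
  have "p_dominating n t p S"
    unfolding S_def
    using a nonfull_part_iff[OF D] less v w \<open>w \<in> verts n t\<close> \<open>fst w = b\<close>
    by (intro p_dominating_transfer[OF dom]) auto
  moreover have "card S = card D"
  proof -
    have "0 < card D" using v \<open>finite D\<close> by (auto simp: card_gt_0_iff)
    then show ?thesis using v w \<open>finite D\<close> by (simp add: S_def)
  qed
  ultimately have "gamma_p_set n t p S" using gamma by (simp add: gamma_p_set_def)
  moreover have "card (Dpart S i) = (if i = a then card (Dpart D a) - 1
                   else if i = b then Suc (card (Dpart D b)) else card (Dpart D i))" for i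
    using v w \<open>fst w = b\<close> \<open>finite D\<close> less
    by (auto simp: S_def card_Dpart_insert card_Dpart_remove)
  ultimately show ?thesis using that by blast
qed

lemma optimal_no_improving_transfer:
  assumes opt: "optimal n t p D"
    and a: "a \<in> Nt t - ID n t D" and b: "b \<in> Nt t - ID n t D"
    and gap: "card (Dpart D b) + 2 \<le> card (Dpart D a)"
    and mean: "card (Dpart D b) < mean_count n t D" "mean_count n t D < card (Dpart D a)"
  shows False
proof -
  have gamma: "gamma_p_set n t p D" using opt by (simp add: optimal_def)
  then have D: "D \<subseteq> verts n t" by (simp add: gamma_p_set_def p_dominating_def)
  obtain S where gamma_S: "gamma_p_set n t p S" and count_S:
    "\<And>i. card (Dpart S i) = (if i = a then card (Dpart D a) - 1
                              else if i = b then Suc (card (Dpart D b)) else card (Dpart D i))"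
    using gamma_p_set_transfer[OF gamma a b] gap by auto
  have "card S = card D" using gamma gamma_S by (simp add: gamma_p_set_def)
  have ID_S: "ID n t S = (if Suc (card (Dpart D b)) = n b then insert b (ID n t D) else ID n t D)"
    using a b nonfull_part_iff[OF D] gap by (auto simp: ID_def count_S)
  show False
  proof (cases "Suc (card (Dpart D b)) = n b")
    case True
    then have "card (ID n t S) = Suc (card (ID n t D))"
      using ID_S b by (simp add: ID_def)
    then show False using opt gamma_S by (auto simp: optimal_def)
  next
    case False
    then have same_ID: "ID n t S = ID n t D" using ID_S by simp
    have same_mean: "mean_count n t S = mean_count n t D"
      using same_ID \<open>card S = card D\<close> by (simp add: mean_count_def)
    have "mu n t S < mu n t D"
      unfolding mu_eq_sum_abs_deviation same_ID same_mean
    proof (rule sum_abs_deviation_transfer_less[where a = a and b = b])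
      show "finite (Nt t - ID n t D)" by simp
    qed (use a b mean gap count_S in auto)
    then show False using opt gamma_S same_ID by (auto simp: optimal_def)
  qed
qed

lemma optimal_card_Dpart_le_Suc:
  assumes opt: "optimal n t p D"
    and i: "i \<in> Nt t - ID n t D" and j: "j \<in> Nt t - ID n t D"
  shows "card (Dpart D i) \<le> Suc (card (Dpart D j))"
proof -
  define J where "J = Nt t - ID n t D"
  define cnt where "cnt k = card (Dpart D k)" for k
  have D: "D \<subseteq> verts n t" using opt by (simp add: optimal_def gamma_p_set_def p_dominating_def)
  have "finite J" "J \<noteq> {}" using i by (auto simp: J_def)
  have "Max (cnt ` J) \<in> cnt ` J" "Min (cnt ` J) \<in> cnt ` J"
    using \<open>finite J\<close> \<open>J \<noteq> {}\<close> by simp_all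
  then obtain a b where "a \<in> J" "Max (cnt ` J) = cnt a" "b \<in> J" "Min (cnt ` J) = cnt b"
    by (elim imageE)
  then have a: "a \<in> J" "\<forall>k\<in>J. cnt k \<le> cnt a" and b: "b \<in> J" "\<forall>k\<in>J. cnt b \<le> cnt k"
    using \<open>finite J\<close> by (metis Max_ge Min_le finite_imageI imageI)+
  have "cnt a \<le> Suc (cnt b)"
  proof (rule ccontr)
    assume "\<not> cnt a \<le> Suc (cnt b)"
    then have gap: "cnt b + 2 \<le> cnt a" by simp
    have mean: "mean_count n t D = (\<Sum>k\<in>J. real (cnt k)) / card J"
      by (simp add: mean_count_eq_average[OF D] J_def cnt_def)
    have "\<forall>k\<in>J. real (cnt b) \<le> real (cnt k) \<and> real (cnt k) \<le> real (cnt a)"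
      using a b by simp
    then have "real (cnt b) < mean_count n t D" "mean_count n t D < real (cnt a)"
      unfolding mean
      using average_strictly_between[OF \<open>finite J\<close> a(1) b(1), of "\<lambda>k. real (cnt k)"] gap
      by simp_all
    then show False
      using optimal_no_improving_transfer[OF opt] a b gap by (auto simp: J_def cnt_def)
  qed
  moreover have "cnt i \<le> cnt a" "cnt b \<le> cnt j" using a b i j by (simp_all add: J_def)
  ultimately show ?thesis by (simp add: cnt_def)
qed

lemma optimal_nonfull_parts_nonempty:
  assumes "optimal n t p D" "p < fsum n (Nt t)"
  shows "Nt t - ID n t D \<noteq> {}"
proof
  assume "Nt t - ID n t D = {}"
  then have "ID n t D = Nt t" by (auto simp: ID_def)
  then show False using assms by (simp add: optimal_def)
qed

lemma optimal_not_single_heavy_part: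
  assumes opt: "optimal n t p D"
    and b: "b \<in> Nt t - ID n t D" "card (Dpart D b) = l"
  shows "card {i \<in> Nt t - ID n t D. card (Dpart D i) = l + 1} \<noteq> 1"
proof
  assume "card {i \<in> Nt t - ID n t D. card (Dpart D i) = l + 1} = 1"
  then obtain j where single: "{i \<in> Nt t - ID n t D. card (Dpart D i) = l + 1} = {j}"
    by (auto simp: card_Suc_eq)
  then have j: "j \<in> Nt t - ID n t D" "card (Dpart D j) = l + 1" by auto
  have "gamma_p_set n t p D" using opt by (simp add: optimal_def)
  then obtain i where i: "i \<in> Nt t - ID n t D" "i \<noteq> j" "l + 1 \<le> card (Dpart D i)"
    using gamma_p_set_max_count_not_unique j by fastforce
  moreover have "card (Dpart D i) \<le> l + 1"
    using optimal_card_Dpart_le_Suc[OF opt i(1) b(1)] b(2) by simp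
  ultimately show False using single by auto
qed

theorem lemma5:
  fixes n :: "nat \<Rightarrow> nat" and t p :: nat and D :: "(nat \<times> nat) set"
  assumes "t \<ge> 2"
    and "\<forall>i \<in> Nt t. n i > 0"
    and "p > 0"
    and "fsum n (Nt t) > p"
    and "optimal n t p D"
  shows "let l = Min {card (Dpart D i) | i. i \<in> Nt t - ID n t D};
             A = {i \<in> Nt t - ID n t D. card (Dpart D i) = l + 1}
         in card A = 0 \<or> (2 \<le> card A \<and> card A \<le> t - card (ID n t D) - 1)"
proof -
  define J where "J = Nt t - ID n t D"
  define l where "l = Min ((\<lambda>i. card (Dpart D i)) ` J)"
  define A where "A = {i \<in> J. card (Dpart D i) = l + 1}"
  have "finite J" "J \<noteq> {}"
    using optimal_nonfull_parts_nonempty[OF assms(5,4)] by (simp_all add: J_def)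
  then have "l \<in> (\<lambda>i. card (Dpart D i)) ` J" by (simp add: l_def)
  then obtain b where b: "b \<in> J" "card (Dpart D b) = l" by auto
  have "card A \<noteq> 1"
    using optimal_not_single_heavy_part[OF assms(5)] b by (simp add: A_def J_def)
  moreover have "card A < card J"
  proof (rule psubset_card_mono[OF \<open>finite J\<close>])
    have "b \<notin> A" using b by (simp add: A_def)
    then show "A \<subset> J" using b(1) unfolding A_def by blast
  qed
  moreover have "card J = t - card (ID n t D)"
    by (simp add: J_def ID_def card_Diff_subset finite_subset)
  moreover have "{card (Dpart D i) | i. i \<in> Nt t - ID n t D} = (\<lambda>i. card (Dpart D i)) ` J"
    by (auto simp: J_def)
  ultimately show ?thesis
    unfolding Let_def by (simp only: J_def[symmetric] l_def[symmetric] A_def[symmetric]) arith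
qed

end
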